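(* A bounded convex subset $A$ of a Banach space $X$ is an SCD set if and only if there is a sequence $(V_n)_{n\in\mathbb{N}}$ of convex combinations of slices of $A$ such that every nonempty relatively weakly open subset of $A$ contains some $V_n$.
   Context: A slice of $A$ is $S(A,x^*,\varepsilon)=\{x\in A:\ \mathrm{Re}\,x^*(x)>\sup\mathrm{Re}\,x^*(A)-\varepsilon\}$ ($x^*\in X^*$, $\varepsilon>0$). A convex combination of slices of $A$ is a set $\sum_{i=1}^m\lambda_iS_i$ with $\lambda_i>0$, $\sum\lambda_i=1$, $S_i$ slices of $A$. $A$ is an SCD set if there is a sequence $(S_n)$ of slices of $A$ such that $A\subseteq\overline{\mathrm{conv}}(B)$ for every $B\subseteq A$ intersecting every $S_n$. *)

theory Defs
  imports "HOL-Analysis.Analysis"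
begin

text \<open>Real (continuous) dual elements are bounded linear maps to real.
  For a complex Banach space, Re x* ranges exactly over the real bounded linear
  functionals of the underlying real space, so this covers both cases.\<close>

definition slice :: "'a::real_normed_vector set \<Rightarrow> ('a \<Rightarrow> real) \<Rightarrow> real \<Rightarrow> 'a set" where
  "slice A f e = {x \<in> A. f x > Sup (f ` A) - e}"

definition is_slice :: "'a::real_normed_vector set \<Rightarrow> 'a set \<Rightarrow> bool" where
  "is_slice A S \<longleftrightarrow> (\<exists>f e. bounded_linear f \<and> e > 0 \<and> S = slice A f e)"

definition is_ccs :: "'a::real_normed_vector set \<Rightarrow> 'a set \<Rightarrow> bool" where
  "is_ccs A V \<longleftrightarrow> (\<exists>(m::nat) (l::nat \<Rightarrow> real) (S::nat \<Rightarrow> 'a set).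
      m \<ge> 1 \<and> (\<forall>i<m. l i > 0 \<and> is_slice A (S i)) \<and> (\<Sum>i<m. l i) = 1 \<and>
      V = {\<Sum>i<m. l i *\<^sub>R x i | x. \<forall>i<m. x i \<in> S i})"

definition SCD_set :: "'a::real_normed_vector set \<Rightarrow> bool" where
  "SCD_set A \<longleftrightarrow> (\<exists>S::nat \<Rightarrow> 'a set. (\<forall>n. is_slice A (S n)) \<and>
      (\<forall>B. B \<subseteq> A \<and> (\<forall>n. B \<inter> S n \<noteq> {}) \<longrightarrow> A \<subseteq> closure (convex hull B)))"

definition weak_topology :: "'a::real_normed_vector topology" where
  "weak_topology = topology_generated_by
     {{x. f x \<in> W} | f W. bounded_linear (f :: 'a \<Rightarrow> real) \<and> open W}"

end

theory Submission
  imports Defs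
begin

text \<open>If \<open>B\<close> meets every slice used by the \<open>V n\<close> but some \<open>x \<in> A\<close> lies outside the closed convex
  hull of \<open>B\<close>, a Hahn--Banach functional separates \<open>x\<close> from \<open>convex hull B\<close>; the weakly open
  half-space around \<open>x\<close> contains some \<open>V n\<close>, yet picking a point of \<open>B\<close> in each slice of \<open>V n\<close>
  gives a point of \<open>V n\<close> in \<open>convex hull B\<close>.

  Conversely, by Bourgain's lemma every nonempty relatively weakly open subset of \<open>A\<close> contains a
  convex combination of slices. Each slice of \<open>A\<close> contains one of the slices \<open>S n\<close> of an SCD
  sequence, and the weights may be taken rational, so the countably many rational convex
  combinations of the \<open>S n\<close> form the required sequence. Bourgain's lemma is proved for the finitely
  many functionals \<open>g j\<close> defining a basic weak neighbourhood, in the Euclidean seminorm they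
  induce: a farthest-point argument shows that \<open>x0\<close> is in the closure of the convex hull of
  those points of \<open>A\<close> that lie in slices of small diameter.\<close>

section \<open>Hahn--Banach separation\<close>

lemma le_INF_add:
  fixes f g :: "_ \<Rightarrow> real"
  assumes "A \<noteq> {}" "B \<noteq> {}" "\<And>a b. a \<in> A \<Longrightarrow> b \<in> B \<Longrightarrow> c \<le> f a + g b"
  shows "c \<le> (INF a\<in>A. f a) + (INF b\<in>B. g b)"
proof -
  have "c - (INF a\<in>A. f a) \<le> g b" if "b \<in> B" for b
  proof -
    have "c - g b \<le> (INF a\<in>A. f a)"
      by (rule cINF_greatest) (use assms that in \<open>auto simp: algebra_simps\<close>)
    then show ?thesis by simp
  qed
  then have "c - (INF a\<in>A. f a) \<le> (INF b\<in>B. g b)"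
    by (intro cINF_greatest assms)
  then show ?thesis by simp
qed

lemma le_mult_INF:
  fixes f :: "_ \<Rightarrow> real"
  assumes "A \<noteq> {}" "s > 0" "\<And>a. a \<in> A \<Longrightarrow> c \<le> s * f a"
  shows "c \<le> s * (INF a\<in>A. f a)"
proof -
  have "c / s \<le> (INF a\<in>A. f a)"
    by (rule cINF_greatest) (use assms in \<open>auto simp: divide_simps mult.commute\<close>)
  then show ?thesis using assms(2) by (simp add: divide_simps mult.commute)
qed

definition sublinear :: "('a::real_vector \<Rightarrow> real) \<Rightarrow> bool" where
  "sublinear p \<longleftrightarrow> (\<forall>x y. p (x + y) \<le> p x + p y) \<and> (\<forall>s x. s > 0 \<longrightarrow> p (s *\<^sub>R x) \<le> s * p x)"

lemma sublinearI:
  assumes "\<And>x y. p (x + y) \<le> p x + p y" "\<And>s x. s > 0 \<Longrightarrow> p (s *\<^sub>R x) \<le> s * p x"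
  shows "sublinear p"
  using assms unfolding sublinear_def by blast

lemma sublinear_add: "sublinear p \<Longrightarrow> p (x + y) \<le> p x + p y"
  unfolding sublinear_def by blast

lemma sublinear_scaleR_le: "sublinear p \<Longrightarrow> s > 0 \<Longrightarrow> p (s *\<^sub>R x) \<le> s * p x"
  unfolding sublinear_def by blast

lemma sublinear_scaleR:
  assumes "sublinear p" "s > 0"
  shows "p (s *\<^sub>R x) = s * p x"
proof -
  have "p x = p (inverse s *\<^sub>R (s *\<^sub>R x))" using assms by simp
  also have "\<dots> \<le> inverse s * p (s *\<^sub>R x)" using assms by (intro sublinear_scaleR_le) auto
  finally have "s * p x \<le> p (s *\<^sub>R x)" using assms(2) by (simp add: field_simps)
  then show ?thesis using sublinear_scaleR_le[OF assms, of x] by linarith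
qed

lemma sublinear_zero:
  assumes "sublinear p"
  shows "p 0 = 0"
proof -
  have "p ((2::real) *\<^sub>R 0) = 2 * p 0" by (rule sublinear_scaleR[OF assms]) simp
  then show ?thesis by simp
qed

lemma sublinear_nonneg_scaleR:
  assumes "sublinear p" "t \<ge> 0"
  shows "p (t *\<^sub>R x) = t * p x"
proof (cases "t = 0")
  case True then show ?thesis using sublinear_zero[OF assms(1)] by simp
next
  case False then show ?thesis using sublinear_scaleR[OF assms(1)] assms(2) by simp
qed

lemma sublinear_uminus_le:
  assumes "sublinear p"
  shows "- p (- x) \<le> p x"
  using sublinear_add[OF assms, of x "- x"] sublinear_zero[OF assms] by simp

text \<open>For subadditivity: of two members of the chain, the smaller one bounds the infimum at both
  arguments.\<close>

lemma sublinear_INF_chain: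
  assumes "C \<noteq> {}"
    and chain: "\<And>a b. a \<in> C \<Longrightarrow> b \<in> C \<Longrightarrow> (\<forall>x. a x \<le> b x) \<or> (\<forall>x. b x \<le> a x)"
    and sub: "\<And>q. q \<in> C \<Longrightarrow> sublinear q \<and> (\<forall>x. q x \<le> p x)"
  shows "sublinear (\<lambda>x. INF q\<in>C. q x)" and "q \<in> C \<Longrightarrow> (INF q'\<in>C. q' x) \<le> q x"
proof -
  have bdd: "bdd_below ((\<lambda>q. q x) ` C)" for x
  proof (rule bdd_belowI[where m = "- p (- x)"])
    fix y assume "y \<in> (\<lambda>q. q x) ` C"
    then obtain q where q: "q \<in> C" "y = q x" by auto
    then have "q (- x) \<le> p (- x)" "- q (- x) \<le> q x"
      using sub[OF q(1)] sublinear_uminus_le[of q x] by auto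
    then show "- p (- x) \<le> y" using q(2) by linarith
  qed
  have le: "(INF q\<in>C. q x) \<le> q x" if "q \<in> C" for q x
    by (rule cINF_lower[OF bdd that])
  then show "q \<in> C \<Longrightarrow> (INF q'\<in>C. q' x) \<le> q x" .
  show "sublinear (\<lambda>x. INF q\<in>C. q x)"
  proof (rule sublinearI)
    fix x y
    show "(INF q\<in>C. q (x + y)) \<le> (INF q\<in>C. q x) + (INF q\<in>C. q y)"
    proof (rule le_INF_add[OF assms(1) assms(1)])
      fix a b assume ab: "a \<in> C" "b \<in> C"
      from chain[OF ab] show "(INF q\<in>C. q (x + y)) \<le> a x + b y"
      proof
        assume "\<forall>x. a x \<le> b x"
        then have "a y \<le> b y" ..
        moreover have "a (x + y) \<le> a x + a y" using sub[OF ab(1)] sublinear_add by blast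
        ultimately show ?thesis using le[OF ab(1), of "x + y"] by linarith
      next
        assume "\<forall>x. b x \<le> a x"
        then have "b x \<le> a x" ..
        moreover have "b (x + y) \<le> b x + b y" using sub[OF ab(2)] sublinear_add by blast
        ultimately show ?thesis using le[OF ab(2), of "x + y"] by linarith
      qed
    qed
  next
    fix s :: real and x assume s: "s > 0"
    show "(INF q\<in>C. q (s *\<^sub>R x)) \<le> s * (INF q\<in>C. q x)"
    proof (rule le_mult_INF[OF assms(1) s])
      fix q assume q: "q \<in> C"
      then have "q (s *\<^sub>R x) \<le> s * q x" using sub sublinear_scaleR_le[OF _ s] by blast
      then show "(INF q\<in>C. q (s *\<^sub>R x)) \<le> s * q x" using le[OF q, of "s *\<^sub>R x"] by linarith
    qed
  qed
qed

text \<open>Pushing a sublinear functional down along the ray through \<open>y\<close>; if the functional is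
  minimal, this forces it to be odd on \<open>y\<close>.\<close>

lemma sublinear_INF_ray:
  fixes q :: "'a::real_vector \<Rightarrow> real" and y :: 'a
  assumes q: "sublinear q"
  defines "r \<equiv> \<lambda>x. INF t\<in>{0::real..}. q (x + t *\<^sub>R y) - t * q y"
  shows "sublinear r" and "r x \<le> q x" and "r (- y) \<le> - q y"
proof -
  have bdd: "bdd_below ((\<lambda>t. q (x + t *\<^sub>R y) - t * q y) ` {0..})" for x
  proof (rule bdd_belowI[where m = "- q (- x)"])
    fix v assume "v \<in> (\<lambda>t. q (x + t *\<^sub>R y) - t * q y) ` {0..}"
    then obtain t where t: "t \<ge> 0" "v = q (x + t *\<^sub>R y) - t * q y" by auto
    have "q (t *\<^sub>R y) \<le> q (x + t *\<^sub>R y) + q (- x)"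
      using sublinear_add[OF q, of "x + t *\<^sub>R y" "- x"] by simp
    then show "- q (- x) \<le> v" using t sublinear_nonneg_scaleR[OF q t(1)] by simp
  qed
  have le: "r x \<le> q (x + t *\<^sub>R y) - t * q y" if "t \<ge> 0" for x t
    unfolding r_def by (rule cINF_lower[OF bdd]) (use that in auto)
  show "r x \<le> q x" using le[of 0 x] by simp
  show "r (- y) \<le> - q y" using le[of 1 "- y"] sublinear_zero[OF q] by simp
  show "sublinear r"
  proof (rule sublinearI)
    fix x z
    show "r (x + z) \<le> r x + r z"
      unfolding r_def
    proof (rule le_INF_add)
      fix a b :: real assume "a \<in> {0..}" "b \<in> {0..}"
      then have "r (x + z) \<le> q ((x + a *\<^sub>R y) + (z + b *\<^sub>R y)) - (a + b) * q y"
        using le[of "a + b" "x + z"] by (simp add: algebra_simps scaleR_add_left)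
      also have "\<dots> \<le> (q (x + a *\<^sub>R y) - a * q y) + (q (z + b *\<^sub>R y) - b * q y)"
        using sublinear_add[OF q, of "x + a *\<^sub>R y" "z + b *\<^sub>R y"] by (simp add: algebra_simps)
      finally show "(INF t\<in>{0::real..}. q (x + z + t *\<^sub>R y) - t * q y)
          \<le> (q (x + a *\<^sub>R y) - a * q y) + (q (z + b *\<^sub>R y) - b * q y)"
        unfolding r_def .
    qed auto
  next
    fix s :: real and x assume s: "s > 0"
    show "r (s *\<^sub>R x) \<le> s * r x"
      unfolding r_def
    proof (rule le_mult_INF)
      fix a :: real assume "a \<in> {0..}"
      then have "r (s *\<^sub>R x) \<le> q (s *\<^sub>R (x + a *\<^sub>R y)) - (s * a) * q y"
        using le[of "s * a" "s *\<^sub>R x"] s by (simp add: scaleR_add_right)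
      also have "\<dots> = s * (q (x + a *\<^sub>R y) - a * q y)"
        using sublinear_scaleR[OF q s, of "x + a *\<^sub>R y"] by (simp add: algebra_simps)
      finally show "(INF t\<in>{0::real..}. q (s *\<^sub>R x + t *\<^sub>R y) - t * q y)
          \<le> s * (q (x + a *\<^sub>R y) - a * q y)"
        unfolding r_def .
    qed (use s in auto)
  qed
qed

lemma linear_if_minimal_sublinear:
  fixes q :: "'a::real_vector \<Rightarrow> real"
  assumes q: "sublinear q" and min: "\<And>r. sublinear r \<Longrightarrow> (\<forall>x. r x \<le> q x) \<Longrightarrow> r = q"
  shows "linear q"
proof -
  have uminus: "q (- y) = - q y" for y
  proof -
    define r where "r = (\<lambda>x. INF t\<in>{0::real..}. q (x + t *\<^sub>R y) - t * q y)"
    have "sublinear r" "\<forall>x. r x \<le> q x"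
      unfolding r_def by (intro sublinear_INF_ray[OF q] allI)+
    then have "r = q" by (rule min)
    moreover have "r (- y) \<le> - q y"
      unfolding r_def by (rule sublinear_INF_ray(3)[OF q])
    ultimately have "q (- y) \<le> - q y" by simp
    then show ?thesis using sublinear_uminus_le[OF q, of y] by linarith
  qed
  have add: "q (x + z) = q x + q z" for x z
    using sublinear_add[OF q, of "x + z" "- z"] sublinear_add[OF q, of x z] uminus[of z] by simp
  have scale: "q (c *\<^sub>R x) = c * q x" for c x
  proof (cases "c \<ge> 0")
    case True then show ?thesis by (rule sublinear_nonneg_scaleR[OF q])
  next
    case False
    then have "q (c *\<^sub>R x) = - q ((- c) *\<^sub>R x)" using uminus[of "(- c) *\<^sub>R x"] by simp
    then show ?thesis using sublinear_scaleR[OF q, of "- c" x] False by simp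
  qed
  show ?thesis by (rule linearI) (simp_all add: add scale)
qed

text \<open>Hahn--Banach: Zorn's lemma yields a minimal sublinear functional below \<open>p\<close>,
  which is linear.\<close>

lemma exists_linear_le_sublinear:
  fixes p :: "'a::real_vector \<Rightarrow> real"
  assumes p: "sublinear p"
  shows "\<exists>f. linear f \<and> (\<forall>x. f x \<le> p x)"
proof -
  define Sb where "Sb = {q. sublinear q \<and> (\<forall>x. q x \<le> p x)}"
  define P where "P = (\<lambda>q1 q2 :: 'a \<Rightarrow> real. \<forall>x. q2 x \<le> q1 x)"
  have po: "partial_order_on Sb (relation_of P Sb)"
    unfolding partial_order_on_def preorder_on_def refl_on_def trans_def antisym_def
      relation_of_def P_def
    by (auto intro!: ext intro: order_trans antisym)
  have "\<exists>u\<in>Sb. \<forall>a\<in>C. P a u" if C: "C \<in> Chains (relation_of P Sb)" for C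
  proof (cases "C = {}")
    case True then show ?thesis using p unfolding Sb_def by auto
  next
    case False
    have CS: "C \<subseteq> Sb" and chain: "\<And>a b. a \<in> C \<Longrightarrow> b \<in> C \<Longrightarrow> P a b \<or> P b a"
      using C unfolding Chains_def relation_of_def by auto
    define u where "u x = (INF q\<in>C. q x)" for x
    have chain': "(\<forall>x. a x \<le> b x) \<or> (\<forall>x. b x \<le> a x)" if "a \<in> C" "b \<in> C" for a b
      using chain[OF that] unfolding P_def by blast
    have sub: "sublinear q \<and> (\<forall>x. q x \<le> p x)" if "q \<in> C" for q
      using CS that unfolding Sb_def by blast
    have "sublinear u"
      unfolding u_def by (rule sublinear_INF_chain(1)[OF False chain' sub])
    moreover have le: "u x \<le> q x" if "q \<in> C" for q x
      unfolding u_def by (rule sublinear_INF_chain(2)[OF False chain' sub that])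
    moreover have "u x \<le> p x" for x
    proof -
      obtain q where "q \<in> C" using False by blast
      then show ?thesis using le[of q x] sub[of q] by (meson order_trans)
    qed
    ultimately show ?thesis unfolding Sb_def P_def by blast
  qed
  then obtain m where m: "m \<in> Sb" "\<forall>a\<in>Sb. P m a \<longrightarrow> a = m"
    using predicate_Zorn[OF po] by blast
  have "linear m"
  proof (rule linear_if_minimal_sublinear)
    show "sublinear m" using m unfolding Sb_def by auto
    fix r assume r: "sublinear r" "\<forall>x. r x \<le> m x"
    have "r x \<le> p x" for x
      using r(2) m(1) unfolding Sb_def by (blast intro: order_trans)
    with r have "r \<in> Sb" unfolding Sb_def by blast
    with m(2) r(2) show "r = m" unfolding P_def by blast
  qed
  then show ?thesis using m unfolding Sb_def by auto
qed

definition cone_gauge :: "'a::real_normed_vector set \<Rightarrow> 'a \<Rightarrow> real \<Rightarrow> 'a \<Rightarrow> real" where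
  "cone_gauge C x \<delta> z = (INF (c, t) \<in> C \<times> {0..}. norm (z + t *\<^sub>R (c - x)) - t * \<delta>)"

context
  fixes C :: "'a::real_normed_vector set" and x :: 'a and \<delta> :: real
  assumes dist_ge: "\<And>c. c \<in> C \<Longrightarrow> \<delta> \<le> norm (c - x)"
begin

lemma cone_gauge_le:
  assumes "c \<in> C" "t \<ge> 0"
  shows "cone_gauge C x \<delta> z \<le> norm (z + t *\<^sub>R (c - x)) - t * \<delta>"
proof -
  have "- norm z \<le> norm (z + t *\<^sub>R (c - x)) - t * \<delta>" if "c \<in> C" "t \<ge> 0" for c t
  proof -
    have "t * \<delta> \<le> norm (t *\<^sub>R (c - x))"
      using dist_ge[OF that(1)] that(2) by (simp add: mult_left_mono)
    also have "\<dots> \<le> norm (z + t *\<^sub>R (c - x)) + norm z"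
      using norm_triangle_ineq4[of "z + t *\<^sub>R (c - x)" z] by simp
    finally show ?thesis by simp
  qed
  then have "bdd_below ((\<lambda>(c, t). norm (z + t *\<^sub>R (c - x)) - t * \<delta>) ` (C \<times> {0..}))"
    by (intro bdd_belowI[where m = "- norm z"]) auto
  from cINF_lower[OF this, of "(c, t)"] assms show ?thesis
    unfolding cone_gauge_def by simp
qed

lemma le_cone_gauge:
  assumes "C \<noteq> {}" "\<And>c t. c \<in> C \<Longrightarrow> t \<ge> 0 \<Longrightarrow> v \<le> norm (z + t *\<^sub>R (c - x)) - t * \<delta>"
  shows "v \<le> cone_gauge C x \<delta> z"
  unfolding cone_gauge_def using assms by (intro cINF_greatest) auto

lemma sublinear_cone_gauge:
  assumes "convex C" "C \<noteq> {}"
  shows "sublinear (cone_gauge C x \<delta>)"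
proof (rule sublinearI)
  fix z1 z2
  let ?g = "cone_gauge C x \<delta>"
  have "?g (z1 + z2) \<le> (norm (z1 + t1 *\<^sub>R (c1 - x)) - t1 * \<delta>) + (norm (z2 + t2 *\<^sub>R (c2 - x)) - t2 * \<delta>)"
    if "c1 \<in> C" "t1 \<ge> 0" "c2 \<in> C" "t2 \<ge> 0" for c1 t1 c2 t2
  proof (cases "t1 + t2 = 0")
    case True
    then have "t1 = 0" "t2 = 0" using that by auto
    then show ?thesis using cone_gauge_le[OF that(1), of 0 "z1 + z2"] norm_triangle_ineq[of z1 z2]
      by simp
  next
    case False
    then have t: "t1 + t2 > 0" using that by auto
    define c where "c = (t1 / (t1 + t2)) *\<^sub>R c1 + (t2 / (t1 + t2)) *\<^sub>R c2"
    have "c \<in> C"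
      unfolding c_def using assms(1) that t by (intro convexD) (auto simp: divide_simps)
    have "(t1 + t2) *\<^sub>R c = t1 *\<^sub>R c1 + t2 *\<^sub>R c2"
      using t unfolding c_def by (simp add: scaleR_add_right)
    then have "z1 + z2 + (t1 + t2) *\<^sub>R (c - x) = (z1 + t1 *\<^sub>R (c1 - x)) + (z2 + t2 *\<^sub>R (c2 - x))"
      by (simp add: algebra_simps)
    then show ?thesis
      using cone_gauge_le[OF \<open>c \<in> C\<close>, of "t1 + t2" "z1 + z2"] t
        norm_triangle_ineq[of "z1 + t1 *\<^sub>R (c1 - x)" "z2 + t2 *\<^sub>R (c2 - x)"]
      by (simp add: algebra_simps)
  qed
  then have "?g (z1 + z2) - (norm (z2 + t2 *\<^sub>R (c2 - x)) - t2 * \<delta>) \<le> ?g z1"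
    if "c2 \<in> C" "t2 \<ge> 0" for c2 t2
    using that by (intro le_cone_gauge[OF assms(2)]) (smt (verit))
  then have "?g (z1 + z2) - ?g z1 \<le> ?g z2"
    by (intro le_cone_gauge[OF assms(2)]) (smt (verit))
  then show "?g (z1 + z2) \<le> ?g z1 + ?g z2" by simp
next
  fix s :: real and z assume s: "s > 0"
  let ?g = "cone_gauge C x \<delta>"
  have "?g (s *\<^sub>R z) / s \<le> norm (z + t *\<^sub>R (c - x)) - t * \<delta>" if "c \<in> C" "t \<ge> 0" for c t
  proof -
    have "?g (s *\<^sub>R z) \<le> norm (s *\<^sub>R (z + t *\<^sub>R (c - x))) - (s * t) * \<delta>"
      using cone_gauge_le[OF that(1), of "s * t" "s *\<^sub>R z"] that s by (simp add: scaleR_add_right)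
    also have "\<dots> = s * (norm (z + t *\<^sub>R (c - x)) - t * \<delta>)"
      using s by (simp only: norm_scaleR abs_of_pos right_diff_distrib mult.assoc)
    finally show ?thesis using s by (simp add: divide_simps mult.commute)
  qed
  then have "?g (s *\<^sub>R z) / s \<le> ?g z" by (rule le_cone_gauge[OF assms(2)])
  then show "?g (s *\<^sub>R z) \<le> s * ?g z" using s by (simp add: divide_simps mult.commute)
qed

end

text \<open>The cone gauge satisfies \<open>p z \<le> norm z\<close> and \<open>p (x - c) \<le> - \<delta>\<close> for \<open>c \<in> C\<close>, so any linear
  functional below it is bounded and separates \<open>x\<close> from \<open>C\<close>.\<close>

lemma separating_functional_closure:
  fixes x :: "'a::real_normed_vector"
  assumes "convex C" "C \<noteq> {}" "x \<notin> closure C"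
  obtains g :: "'a \<Rightarrow> real" and \<delta> :: real where "bounded_linear g" "\<delta> > 0" "\<And>c. c \<in> C \<Longrightarrow> g x + \<delta> \<le> g c"
proof -
  obtain \<delta> where \<delta>: "\<delta> > 0" "\<And>c. c \<in> C \<Longrightarrow> \<delta> \<le> norm (c - x)"
    using assms(3) unfolding closure_approachable by (auto simp: dist_norm not_less)
  let ?p = "cone_gauge C x \<delta>"
  obtain f where f: "linear f" "\<And>z. f z \<le> ?p z"
    using exists_linear_le_sublinear[OF sublinear_cone_gauge[OF \<delta>(2) assms(1,2)]] by blast
  obtain c0 where "c0 \<in> C" using assms(2) by blast
  have norm: "f z \<le> norm z" for z
    using f(2)[of z] cone_gauge_le[OF \<delta>(2) \<open>c0 \<in> C\<close>, of 0 z] by simp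
  have "bounded_linear f"
  proof (rule bounded_linear_intro[where K = 1])
    show "f (a + b) = f a + f b" "f (r *\<^sub>R a) = r *\<^sub>R f a" for a b r
      using f(1) by (simp_all add: linear_add linear_scale)
    show "norm (f a) \<le> norm a * 1" for a
      using norm[of a] norm[of "- a"] linear_neg[OF f(1), of a] by auto
  qed
  moreover have "f x + \<delta> \<le> f c" if "c \<in> C" for c
  proof -
    have "f (x - c) \<le> - \<delta>"
      using f(2)[of "x - c"] cone_gauge_le[OF \<delta>(2) that, of 1 "x - c"] by simp
    then show ?thesis using linear_diff[OF f(1)] by simp
  qed
  ultimately show ?thesis using \<delta>(1) that by blast
qed

section \<open>Slices and the weak topology\<close>

lemma is_slice_subset: "is_slice A S \<Longrightarrow> S \<subseteq> A"
  unfolding is_slice_def slice_def by auto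

lemma bdd_above_bounded_linear_image:
  fixes f :: "'a::real_normed_vector \<Rightarrow> real"
  assumes "bounded A" "bounded_linear f"
  shows "bdd_above (f ` A)"
  by (rule bounded_imp_bdd_above[OF bounded_linear_image[OF assms]])

lemma slice_nonempty:
  fixes f :: "'a::real_normed_vector \<Rightarrow> real"
  assumes "A \<noteq> {}" "bounded A" "bounded_linear f" "e > 0"
  shows "slice A f e \<noteq> {}"
proof -
  have "Sup (f ` A) - e < Sup (f ` A)" using assms(4) by simp
  then obtain y where "y \<in> f ` A" "Sup (f ` A) - e < y"
    using less_cSup_iff[of "f ` A"] assms(1) bdd_above_bounded_linear_image[OF assms(2,3)] by auto
  then show ?thesis unfolding slice_def by auto
qed

lemma openin_weak_topology_halfspace:
  fixes g :: "'a::real_normed_vector \<Rightarrow> real"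
  assumes "bounded_linear g"
  shows "openin weak_topology {y. g y < a}"
proof -
  have "{y. g y < a} = {y. g y \<in> {..<a}}" by auto
  also have "openin weak_topology \<dots>"
    unfolding weak_topology_def
    by (rule topology_generated_by_Basis) (use assms in \<open>auto intro!: exI[of _ g] exI[of _ "{..<a}"]\<close>)
  finally show ?thesis .
qed

definition weak_nbhd :: "(nat \<Rightarrow> 'a \<Rightarrow> real) \<Rightarrow> nat \<Rightarrow> 'a \<Rightarrow> real \<Rightarrow> 'a set" where
  "weak_nbhd g k x \<epsilon> = {y. \<forall>j<k. \<bar>g j y - g j x\<bar> < \<epsilon>}"

lemma weak_nbhd_Int:
  fixes g1 g2 :: "nat \<Rightarrow> 'a::real_normed_vector \<Rightarrow> real"
  assumes "\<forall>j<k1. bounded_linear (g1 j)" "\<forall>j<k2. bounded_linear (g2 j)" "e1 > 0" "e2 > 0"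
  obtains k and g :: "nat \<Rightarrow> 'a \<Rightarrow> real" and e :: real
  where "\<forall>j<k. bounded_linear (g j)" "e > 0"
    "weak_nbhd g k x e \<subseteq> weak_nbhd g1 k1 x e1 \<inter> weak_nbhd g2 k2 x e2"
proof -
  define g where "g j = (if j < k1 then g1 j else g2 (j - k1))" for j
  have "y \<in> weak_nbhd g1 k1 x e1 \<inter> weak_nbhd g2 k2 x e2"
    if y: "y \<in> weak_nbhd g (k1 + k2) x (min e1 e2)" for y
  proof -
    have "\<bar>g1 j y - g1 j x\<bar> < e1" if "j < k1" for j
      using y that unfolding weak_nbhd_def g_def by (force dest: spec[of _ j])
    moreover have "\<bar>g2 j y - g2 j x\<bar> < e2" if "j < k2" for j
      using y that unfolding weak_nbhd_def g_def by (force dest: spec[of _ "j + k1"])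
    ultimately show ?thesis unfolding weak_nbhd_def by blast
  qed
  moreover have "\<forall>j<k1 + k2. bounded_linear (g j)" using assms(1,2) unfolding g_def by auto
  ultimately show ?thesis using that[of "k1 + k2" g "min e1 e2"] assms(3,4) by force
qed

lemma weak_topology_basic_nbhd:
  fixes W :: "'a::real_normed_vector set"
  assumes "openin weak_topology W" "x \<in> W"
  obtains k and g :: "nat \<Rightarrow> 'a \<Rightarrow> real" and \<epsilon> :: real
  where "\<forall>j<k. bounded_linear (g j)" "\<epsilon> > 0" "weak_nbhd g k x \<epsilon> \<subseteq> W"
proof -
  have "generate_topology_on {{x. f x \<in> W} | f W. bounded_linear (f :: 'a \<Rightarrow> real) \<and> open W} W"
    using assms(1) unfolding weak_topology_def openin_topology_generated_by_iff .
  then have "\<exists>k (g :: nat \<Rightarrow> 'a \<Rightarrow> real) \<epsilon>. (\<forall>j<k. bounded_linear (g j)) \<and> \<epsilon> > 0 \<and>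
      weak_nbhd g k x \<epsilon> \<subseteq> W"
    using assms(2)
  proof (induction arbitrary: x)
    case Empty then show ?case by simp
  next
    case (Int a b)
    obtain k1 and g1 :: "nat \<Rightarrow> 'a \<Rightarrow> real" and e1 where
      1: "\<forall>j<k1. bounded_linear (g1 j)" "e1 > 0" "weak_nbhd g1 k1 x e1 \<subseteq> a"
      using Int.IH(1) Int.prems by blast
    obtain k2 and g2 :: "nat \<Rightarrow> 'a \<Rightarrow> real" and e2 where
      2: "\<forall>j<k2. bounded_linear (g2 j)" "e2 > 0" "weak_nbhd g2 k2 x e2 \<subseteq> b"
      using Int.IH(2) Int.prems by blast
    obtain k and g :: "nat \<Rightarrow> 'a \<Rightarrow> real" and e :: real where "\<forall>j<k. bounded_linear (g j)" "e > 0"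
      "weak_nbhd g k x e \<subseteq> weak_nbhd g1 k1 x e1 \<inter> weak_nbhd g2 k2 x e2"
      using weak_nbhd_Int[OF 1(1) 2(1) 1(2) 2(2)] by blast
    then show ?case using 1(3) 2(3) by blast
  next
    case (UN K)
    then obtain k where "k \<in> K" "x \<in> k" by blast
    then show ?case using UN.IH[of k x] by blast
  next
    case (Basis s)
    then obtain f :: "'a \<Rightarrow> real" and U where fU: "s = {x. f x \<in> U}" "bounded_linear f" "open U"
      by blast
    then obtain e where "e > 0" "ball (f x) e \<subseteq> U" using Basis.prems openE by blast
    then have "weak_nbhd (\<lambda>_. f) (Suc 0) x e \<subseteq> s"
      unfolding fU(1) weak_nbhd_def by (auto simp: dist_real_def abs_minus_commute)
    then show ?case using fU(2) \<open>e > 0\<close> by (intro exI[of _ "Suc 0"] exI[of _ "\<lambda>_. f"] exI[of _ e]) auto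
  qed
  then show ?thesis using that by blast
qed

section \<open>From a weak base of convex combinations of slices to an SCD set\<close>

lemma is_ccs_meets_convex_hull:
  assumes "is_ccs A V"
  obtains \<S> where "finite \<S>" "\<S> \<noteq> {}" "\<forall>S\<in>\<S>. is_slice A S"
    "\<And>B. (\<forall>S\<in>\<S>. B \<inter> S \<noteq> {}) \<Longrightarrow> V \<inter> convex hull B \<noteq> {}"
proof -
  obtain m l and S :: "nat \<Rightarrow> 'a set" where m: "m \<ge> 1" "\<forall>i<m. l i > 0 \<and> is_slice A (S i)"
      "(\<Sum>i<m. l i) = 1" "V = {\<Sum>i<m. l i *\<^sub>R x i | x. \<forall>i<m. x i \<in> S i}"
    using assms unfolding is_ccs_def by blast
  have "V \<inter> convex hull B \<noteq> {}" if B: "\<forall>S\<in>S ` {..<m}. B \<inter> S \<noteq> {}" for B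
  proof -
    have "\<forall>i. \<exists>b. i < m \<longrightarrow> b \<in> B \<inter> S i" using B by blast
    then obtain b where b: "\<And>i. i < m \<Longrightarrow> b i \<in> B \<inter> S i" by metis
    have "(\<Sum>i<m. l i *\<^sub>R b i) \<in> V" using m(4) b by blast
    moreover have "(\<Sum>i<m. l i *\<^sub>R b i) \<in> convex hull B"
      by (rule convex_sum) (use m(2,3) b hull_subset[of B convex] in \<open>auto simp: less_imp_le\<close>)
    ultimately show ?thesis by blast
  qed
  moreover have "S 0 \<in> S ` {..<m}" using m(1) by simp
  ultimately show ?thesis using that[of "S ` {..<m}"] m(2) by blast
qed

lemma SCD_setI_countable:
  assumes "countable \<S>" "\<S> \<noteq> {}" "\<forall>S\<in>\<S>. is_slice A S"
    and "\<And>B. B \<subseteq> A \<Longrightarrow> (\<forall>S\<in>\<S>. B \<inter> S \<noteq> {}) \<Longrightarrow> A \<subseteq> closure (convex hull B)"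
  shows "SCD_set A"
  unfolding SCD_set_def
proof (intro exI[of _ "from_nat_into \<S>"] conjI allI impI)
  show "is_slice A (from_nat_into \<S> n)" for n using from_nat_into[OF assms(2)] assms(3) by blast
  fix B assume B: "B \<subseteq> A \<and> (\<forall>n. B \<inter> from_nat_into \<S> n \<noteq> {})"
  have "B \<inter> S \<noteq> {}" if S: "S \<in> \<S>" for S
  proof -
    obtain n where "S = from_nat_into \<S> n" using from_nat_into_surj[OF assms(1) S] by metis
    then show ?thesis using B by simp
  qed
  then show "A \<subseteq> closure (convex hull B)" by (intro assms(4)) (use B in auto)
qed

lemma SCD_set_if_ccs_weak_base:
  fixes A :: "'a::real_normed_vector set" and V :: "nat \<Rightarrow> 'a set"
  assumes V: "\<forall>n. is_ccs A (V n)"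
    and base: "\<forall>U. openin (subtopology weak_topology A) U \<and> U \<noteq> {} \<longrightarrow> (\<exists>n. V n \<subseteq> U)"
  shows "SCD_set A"
proof -
  have "\<exists>\<S>. finite \<S> \<and> \<S> \<noteq> {} \<and> (\<forall>S\<in>\<S>. is_slice A S) \<and>
      (\<forall>B. (\<forall>S\<in>\<S>. B \<inter> S \<noteq> {}) \<longrightarrow> V n \<inter> convex hull B \<noteq> {})" for n
    by (rule is_ccs_meets_convex_hull[OF V[rule_format]]) blast
  then obtain \<S> where \<S>: "\<And>n. finite (\<S> n)" "\<And>n. \<S> n \<noteq> {}" "\<And>n. \<forall>S\<in>\<S> n. is_slice A S"
    "\<And>n B. (\<forall>S\<in>\<S> n. B \<inter> S \<noteq> {}) \<Longrightarrow> V n \<inter> convex hull B \<noteq> {}"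
    by metis
  show ?thesis
  proof (rule SCD_setI_countable[of "\<Union>n. \<S> n"])
    show "countable (\<Union>n. \<S> n)" by (rule countable_UN) (simp_all add: countable_finite \<S>(1))
    show "(\<Union>n. \<S> n) \<noteq> {}" using \<S>(2)[of 0] by blast
    show "\<forall>S\<in>\<Union>n. \<S> n. is_slice A S" using \<S>(3) by blast
    fix B assume B: "B \<subseteq> A" "\<forall>S\<in>\<Union>n. \<S> n. B \<inter> S \<noteq> {}"
    show "A \<subseteq> closure (convex hull B)"
    proof
      fix x assume x: "x \<in> A"
      show "x \<in> closure (convex hull B)"
      proof (rule ccontr)
        assume x_notin: "x \<notin> closure (convex hull B)"
        obtain S where "S \<in> \<S> 0" using \<S>(2) by blast
        then have hull_ne: "convex hull B \<noteq> {}" using B(2) by auto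
        obtain g :: "'a \<Rightarrow> real" and \<delta> :: real where g: "bounded_linear g" "\<delta> > 0"
          "\<And>c. c \<in> convex hull B \<Longrightarrow> g x + \<delta> \<le> g c"
          using separating_functional_closure[OF convex_convex_hull hull_ne x_notin] by metis
        have "openin (subtopology weak_topology A) ({y. g y < g x + \<delta>} \<inter> A)"
          unfolding openin_subtopology using openin_weak_topology_halfspace[OF g(1)] by blast
        moreover have "x \<in> {y. g y < g x + \<delta>} \<inter> A" using x g(2) by simp
        ultimately obtain n where n: "V n \<subseteq> {y. g y < g x + \<delta>} \<inter> A"
          using base by blast
        have "V n \<inter> convex hull B \<noteq> {}" by (rule \<S>(4)) (use B(2) in blast)
        then obtain c where "c \<in> V n" "c \<in> convex hull B" by blast
        then show False using n g(3)[of c] by auto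
      qed
    qed
  qed
qed

section \<open>Bourgain's lemma\<close>

lemma uniform_bound_bounded_linear_family:
  fixes g :: "nat \<Rightarrow> 'a::real_normed_vector \<Rightarrow> real"
  assumes "\<forall>j<k. bounded_linear (g j)"
  obtains K where "K > 0" "\<And>j u. j < k \<Longrightarrow> \<bar>g j u\<bar> \<le> norm u * K"
proof -
  have "\<exists>K>0. \<forall>j<k. \<forall>u. \<bar>g j u\<bar> \<le> norm u * K"
    using assms
  proof (induction k)
    case 0 then show ?case by (intro exI[of _ 1]) auto
  next
    case (Suc k)
    then obtain K where K: "K > 0" "\<forall>j<k. \<forall>u. \<bar>g j u\<bar> \<le> norm u * K" by auto
    obtain K' where K': "K' > 0" "\<forall>u. norm (g k u) \<le> norm u * K'"
      using bounded_linear.pos_bounded[of "g k"] Suc.prems by auto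
    have "\<bar>g j u\<bar> \<le> norm u * max K K'" if "j < Suc k" for j u
    proof -
      have "\<bar>g j u\<bar> \<le> norm u * K \<or> \<bar>g j u\<bar> \<le> norm u * K'"
        using that K(2) K'(2) less_Suc_eq by auto
      moreover have "norm u * K \<le> norm u * max K K'" "norm u * K' \<le> norm u * max K K'"
        by (simp_all add: mult_left_mono)
      ultimately show ?thesis by linarith
    qed
    then show ?case using K(1) by (intro exI[of _ "max K K'"]) auto
  qed
  then show ?thesis using that by blast
qed

lemma mult_le_if_le_divide_add1:
  fixes M x c :: real
  assumes "M \<ge> 0" "c \<ge> 0" "x \<le> c / (M + 1)"
  shows "M * x \<le> c"
proof -
  have "M * x \<le> M * (c / (M + 1))" using assms by (intro mult_left_mono) auto
  also have "\<dots> \<le> c" using assms by (simp add: field_simps)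
  finally show ?thesis .
qed

lemma convex_hull_positive_combination:
  assumes "w \<in> convex hull D"
  obtains m :: nat and l :: "nat \<Rightarrow> real" and p :: "nat \<Rightarrow> 'a::real_vector"
  where "m \<ge> 1" "\<And>i. i < m \<Longrightarrow> l i > 0 \<and> p i \<in> D" "(\<Sum>i<m. l i) = 1"
    "w = (\<Sum>i<m. l i *\<^sub>R p i)"
proof -
  obtain S u where S: "finite S" "S \<subseteq> D" "\<forall>x\<in>S. 0 \<le> u x" "sum u S = 1"
    "(\<Sum>v\<in>S. u v *\<^sub>R v) = w"
    using assms unfolding convex_hull_explicit by blast
  define S' where "S' = {v\<in>S. u v > 0}"
  have S'S: "S' \<subseteq> S" unfolding S'_def by auto
  have zero: "\<forall>v\<in>S - S'. u v = 0" using S(3) unfolding S'_def by force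
  have sum_u: "sum u S' = 1" using sum.mono_neutral_right[OF S(1) S'S zero] S(4) by simp
  have sum_w: "(\<Sum>v\<in>S'. u v *\<^sub>R v) = w"
    using sum.mono_neutral_right[OF S(1) S'S, of "\<lambda>v. u v *\<^sub>R v"] zero S(5) by simp
  have fin: "finite S'" using S(1) S'S finite_subset by blast
  define p where "p = from_nat_into S'"
  have p: "bij_betw p {..<card S'} S'"
    unfolding p_def by (rule bij_betw_from_nat_into_finite[OF fin])
  have "S' \<noteq> {}" using sum_u by auto
  then have "card S' \<ge> 1" using fin by (simp add: Suc_le_eq card_gt_0_iff)
  moreover have "u (p i) > 0 \<and> p i \<in> D" if "i < card S'" for i
    using bij_betwE[OF p] that S(2) unfolding S'_def by auto
  moreover have "(\<Sum>i<card S'. u (p i)) = 1"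
    using sum.reindex_bij_betw[OF p, of u] sum_u by simp
  moreover have "w = (\<Sum>i<card S'. u (p i) *\<^sub>R p i)"
    using sum.reindex_bij_betw[OF p, of "\<lambda>v. u v *\<^sub>R v"] sum_w by simp
  ultimately show ?thesis using that[of "card S'" "\<lambda>i. u (p i)" p] by blast
qed

lemma rational_weights_approx:
  fixes l :: "nat \<Rightarrow> real"
  assumes m: "m \<ge> 1" and pos: "\<And>i. i < m \<Longrightarrow> l i > 0" and sum: "(\<Sum>i<m. l i) = 1" and \<eta>: "\<eta> > 0"
  obtains \<mu> :: "nat \<Rightarrow> rat"
  where "\<And>i. i < m \<Longrightarrow> (of_rat (\<mu> i) :: real) > 0 \<and> \<bar>of_rat (\<mu> i) - l i\<bar> < \<eta>"
    "(\<Sum>i<m. (of_rat (\<mu> i) :: real)) = 1"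
proof -
  define p where "p = m - 1"
  have mp: "m = Suc p" unfolding p_def using m by simp
  have "\<exists>q::rat. i < p \<longrightarrow> max 0 (l i - \<eta> / m) < of_rat q \<and> of_rat q < l i" for i
    using of_rat_dense[of "max 0 (l i - \<eta> / m)" "l i"] pos[of i] \<eta> mp by (cases "i < p") auto
  then obtain q :: "nat \<Rightarrow> rat"
    where q: "\<And>i. i < p \<Longrightarrow> max 0 (l i - \<eta> / m) < of_rat (q i) \<and> of_rat (q i) < l i"
    by metis
  define \<mu> where "\<mu> i = (if i < p then q i else 1 - (\<Sum>i<p. q i))" for i
  have gap: "(of_rat (\<mu> p) :: real) - l p = (\<Sum>i<p. l i - of_rat (q i))"
    using sum unfolding mp \<mu>_def by (simp add: of_rat_diff of_rat_sum sum_subtractf)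
  have "0 \<le> (\<Sum>i<p. l i - of_rat (q i))"
    using q by (intro sum_nonneg) (simp add: less_imp_le)
  moreover have "(\<Sum>i<p. l i - of_rat (q i)) \<le> (\<Sum>i<p. \<eta> / m)"
  proof (rule sum_mono)
    fix i assume "i \<in> {..<p}"
    then have "l i - \<eta> / m < of_rat (q i)" using q[of i] by simp
    then show "l i - of_rat (q i) \<le> \<eta> / m" by simp
  qed
  moreover have "(\<Sum>i<p. \<eta> / m) < \<eta>" using \<eta> unfolding mp by (simp add: field_simps)
  ultimately have gap_bounds: "0 \<le> (of_rat (\<mu> p) :: real) - l p" "(of_rat (\<mu> p) :: real) - l p < \<eta>"
    unfolding gap by linarith+
  show ?thesis
  proof (rule that)
    fix i assume "i < m"
    then consider "i < p" | "i = p" unfolding mp by linarith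
    then show "(of_rat (\<mu> i) :: real) > 0 \<and> \<bar>of_rat (\<mu> i) - l i\<bar> < \<eta>"
    proof cases
      case 1
      moreover have "\<eta> / m \<le> \<eta>" using \<eta> m by (simp add: field_simps)
      ultimately show ?thesis using q[of i] unfolding \<mu>_def by auto
    next
      case 2
      have "l p > 0" using pos mp by simp
      then have "(of_rat (\<mu> p) :: real) > 0" using gap_bounds(1) by linarith
      moreover have "\<bar>(of_rat (\<mu> p) :: real) - l p\<bar> < \<eta>" using gap_bounds by (simp add: abs_of_nonneg)
      ultimately show ?thesis using 2 by blast
    qed
  next
    have "(\<Sum>i<p. (of_rat (\<mu> i) :: real)) = (\<Sum>i<p. of_rat (q i))"
      unfolding \<mu>_def by (intro sum.cong) auto
    then show "(\<Sum>i<m. (of_rat (\<mu> i) :: real)) = 1"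
      unfolding mp by (simp add: \<mu>_def of_rat_diff of_rat_sum)
  qed
qed

lemma abs_linear_combination_diff_le:
  fixes f :: "'a::real_vector \<Rightarrow> real" and m :: nat
  assumes "linear f" "\<And>i. i < m \<Longrightarrow> \<bar>a i - b i\<bar> \<le> \<eta>" "\<And>i. i < m \<Longrightarrow> \<bar>f (x i)\<bar> \<le> K"
  shows "\<bar>f (\<Sum>i<m. a i *\<^sub>R x i) - f (\<Sum>i<m. b i *\<^sub>R x i)\<bar> \<le> real m * \<eta> * K"
proof -
  have "f (\<Sum>i<m. a i *\<^sub>R x i) - f (\<Sum>i<m. b i *\<^sub>R x i) = (\<Sum>i<m. (a i - b i) * f (x i))"
    using assms(1) by (simp add: linear_sum linear_scale sum_subtractf left_diff_distrib)
  also have "\<bar>\<dots>\<bar> \<le> (\<Sum>i<m. \<eta> * K)"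
  proof (rule order_trans[OF sum_abs sum_mono])
    fix i assume "i \<in> {..<m}"
    then have "\<bar>a i - b i\<bar> \<le> \<eta>" "\<bar>f (x i)\<bar> \<le> K" using assms(2,3) by auto
    then show "\<bar>(a i - b i) * f (x i)\<bar> \<le> \<eta> * K"
      unfolding abs_mult by (intro mult_mono) auto
  qed
  finally show ?thesis by (simp add: mult.assoc)
qed

text \<open>\<open>coord_sq g k u\<close> is \<open>|T u|\<^sup>2\<close> for \<open>T = (g 0, \<dots>, g (k - 1)) : X \<rightarrow> \<real>\<^sup>k\<close>; it stands in for the
  Euclidean geometry of \<open>\<real>\<^sup>k\<close> in the proof of Bourgain's lemma.\<close>

definition coord_sq :: "(nat \<Rightarrow> 'a \<Rightarrow> real) \<Rightarrow> nat \<Rightarrow> 'a \<Rightarrow> real" where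
  "coord_sq g k u = (\<Sum>j<k. (g j u)\<^sup>2)"

definition coord_inner :: "(nat \<Rightarrow> 'a \<Rightarrow> real) \<Rightarrow> nat \<Rightarrow> 'a \<Rightarrow> 'a \<Rightarrow> real" where
  "coord_inner g k v u = (\<Sum>j<k. g j v * g j u)"

definition small_slice_points :: "'a::real_normed_vector set \<Rightarrow> (nat \<Rightarrow> 'a \<Rightarrow> real) \<Rightarrow> nat \<Rightarrow> real \<Rightarrow> 'a set" where
  "small_slice_points A g k r =
    {w \<in> A. \<exists>S. is_slice A S \<and> w \<in> S \<and> (\<forall>z\<in>S. \<forall>j<k. \<bar>g j z - g j w\<bar> < r)}"

context
  fixes g :: "nat \<Rightarrow> 'a::real_normed_vector \<Rightarrow> real" and k :: nat
  assumes bl: "\<forall>j<k. bounded_linear (g j)"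
begin

lemma coord_linear: "j < k \<Longrightarrow> linear (g j)"
  using bl bounded_linear.linear by blast

lemma coord_add: "j < k \<Longrightarrow> g j (a + b) = g j a + g j b"
  using coord_linear linear_add by blast

lemma coord_diff: "j < k \<Longrightarrow> g j (a - b) = g j a - g j b"
  using coord_linear linear_diff by blast

lemma coord_scaleR: "j < k \<Longrightarrow> g j (c *\<^sub>R a) = c * g j a"
  using coord_linear linear_scale by fastforce

lemma coord_sum: "j < k \<Longrightarrow> g j (\<Sum>i\<in>I. f i) = (\<Sum>i\<in>I. g j (f i))"
  using coord_linear linear_sum by blast

lemma coord_sq_nonneg: "0 \<le> coord_sq g k u"
  unfolding coord_sq_def by (intro sum_nonneg) auto

lemma coord_inner_self: "coord_inner g k u u = coord_sq g k u"
  unfolding coord_sq_def coord_inner_def by (simp add: power2_eq_square)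

lemma coord_inner_commute: "coord_inner g k u v = coord_inner g k v u"
  unfolding coord_inner_def by (simp add: mult.commute)

lemma coord_inner_diff: "coord_inner g k v (a - b) = coord_inner g k v a - coord_inner g k v b"
  unfolding coord_inner_def by (simp add: coord_diff right_diff_distrib sum_subtractf)

lemma coord_inner_scaleR: "coord_inner g k v (c *\<^sub>R a) = c * coord_inner g k v a"
  unfolding coord_inner_def by (simp add: coord_scaleR sum_distrib_left algebra_simps)

lemma coord_sq_diff:
  "coord_sq g k (a - b) = coord_sq g k a - 2 * coord_inner g k a b + coord_sq g k b"
proof -
  have "coord_sq g k (a - b) = (\<Sum>j<k. (g j a)\<^sup>2 - 2 * (g j a * g j b) + (g j b)\<^sup>2)"
    unfolding coord_sq_def by (intro sum.cong) (auto simp: coord_diff power2_eq_square algebra_simps)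
  then show ?thesis
    unfolding coord_sq_def coord_inner_def by (simp add: sum.distrib sum_subtractf sum_distrib_left)
qed

lemma coord_sq_add:
  "coord_sq g k (a + b) = coord_sq g k a + 2 * coord_inner g k a b + coord_sq g k b"
proof -
  have "coord_sq g k (a + b) = (\<Sum>j<k. (g j a)\<^sup>2 + 2 * (g j a * g j b) + (g j b)\<^sup>2)"
    unfolding coord_sq_def by (intro sum.cong) (auto simp: coord_add power2_eq_square algebra_simps)
  then show ?thesis
    unfolding coord_sq_def coord_inner_def by (simp add: sum.distrib sum_distrib_left)
qed

lemma coord_sq_scaleR: "coord_sq g k (c *\<^sub>R a) = c\<^sup>2 * coord_sq g k a"
  unfolding coord_sq_def by (simp add: coord_scaleR sum_distrib_left power_mult_distrib)

lemma coord_sq_minus_commute: "coord_sq g k (a - b) = coord_sq g k (b - a)"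
  using coord_sq_scaleR[of "- 1" "a - b"] by simp

lemma abs_coord_less:
  assumes "j < k" "coord_sq g k u < e\<^sup>2" "e > 0"
  shows "\<bar>g j u\<bar> < e"
proof -
  have "(g j u)\<^sup>2 \<le> coord_sq g k u"
    unfolding coord_sq_def using assms(1) by (intro member_le_sum) auto
  then have "\<bar>g j u\<bar>\<^sup>2 < e\<^sup>2" using assms(2) by simp
  then show ?thesis by (rule power2_less_imp_less) (use assms(3) in simp)
qed

lemma bounded_linear_coord_inner: "bounded_linear (coord_inner g k v)"
  unfolding coord_inner_def[abs_def] using bl
  by (intro bounded_linear_sum bounded_linear_const_mult) auto

lemma abs_coord_inner_le:
  assumes "\<And>j. j < k \<Longrightarrow> \<bar>g j u\<bar> \<le> e"
  shows "\<bar>coord_inner g k v u\<bar> \<le> (\<Sum>j<k. \<bar>g j v\<bar>) * e"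
proof -
  have "\<bar>coord_inner g k v u\<bar> \<le> (\<Sum>j<k. \<bar>g j v\<bar> * \<bar>g j u\<bar>)"
    unfolding coord_inner_def abs_mult[symmetric] by (rule sum_abs)
  also have "\<dots> \<le> (\<Sum>j<k. \<bar>g j v\<bar> * e)"
    using assms by (intro sum_mono mult_left_mono) auto
  finally show ?thesis by (simp add: sum_distrib_right)
qed

lemma bounded_coord_abs:
  assumes "bounded S"
  obtains K where "K \<ge> 0" "\<And>j u. j < k \<Longrightarrow> u \<in> S \<Longrightarrow> \<bar>g j u\<bar> \<le> K"
proof -
  obtain K where K: "K > 0" "\<And>j u. j < k \<Longrightarrow> \<bar>g j u\<bar> \<le> norm u * K"
    using uniform_bound_bounded_linear_family[OF bl] by blast
  obtain R where R: "R > 0" "\<And>u. u \<in> S \<Longrightarrow> norm u \<le> R" using assms unfolding bounded_pos by blast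
  have "\<bar>g j u\<bar> \<le> R * K" if "j < k" "u \<in> S" for j u
    using K(2)[OF that(1), of u] R(2)[OF that(2)] K(1) by (meson mult_right_mono less_imp_le order_trans)
  moreover have "R * K \<ge> 0" using R(1) K(1) by simp
  ultimately show ?thesis using that by blast
qed

lemma bdd_above_coord_sq:
  assumes "bounded S"
  shows "bdd_above (coord_sq g k ` S)"
proof -
  obtain K where K: "K \<ge> 0" "\<And>j u. j < k \<Longrightarrow> u \<in> S \<Longrightarrow> \<bar>g j u\<bar> \<le> K"
    using bounded_coord_abs[OF assms] by blast
  have "coord_sq g k u \<le> real k * K\<^sup>2" if "u \<in> S" for u
  proof -
    have "coord_sq g k u \<le> (\<Sum>j<k. K\<^sup>2)"
      unfolding coord_sq_def using K that by (intro sum_mono) (simp add: abs_le_square_iff[symmetric])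
    then show ?thesis by simp
  qed
  then show ?thesis by (intro bdd_aboveI2)
qed

lemma bounded_coord_sq_diff:
  assumes "bounded S"
  obtains M where "M \<ge> 0" "\<And>a b. a \<in> S \<Longrightarrow> b \<in> S \<Longrightarrow> coord_sq g k (a - b) \<le> M"
proof -
  have "bounded (\<Union>a\<in>S. \<Union>b\<in>S. {a - b})" by (rule bounded_differences[OF assms assms])
  then obtain M where "\<And>u. u \<in> (\<Union>a\<in>S. \<Union>b\<in>S. {a - b}) \<Longrightarrow> coord_sq g k u \<le> M"
    using bdd_above_coord_sq by (meson bdd_above.E imageI)
  then show ?thesis using that[of "max M 0"] by fastforce
qed

text \<open>The slice cut off by the coordinate inner product with \<open>z0 - c\<close>, where \<open>z0\<close> is almost
  farthest from \<open>c\<close>, lies in a small ball around \<open>z0\<close>.\<close>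

lemma farthest_point_slice:
  assumes A: "bounded A" "A \<noteq> {}" and \<eta>: "\<eta> > 0"
  obtains z0 S where "z0 \<in> A" "is_slice A S" "S \<noteq> {}"
    "\<And>z. z \<in> S \<Longrightarrow> coord_sq g k (z - z0) < 3 * \<eta>"
    "\<And>y. y \<in> A \<Longrightarrow> coord_sq g k (y - c) < coord_sq g k (z0 - c) + \<eta>"
proof -
  let ?Q = "coord_sq g k" and ?B = "coord_inner g k"
  have "bdd_above (?Q ` (\<lambda>z. - c + z) ` A)"
    by (rule bdd_above_coord_sq[OF bounded_translation[OF A(1)]])
  then have bdd: "bdd_above ((\<lambda>z. ?Q (z - c)) ` A)" by (simp add: image_image)
  define R where "R = (SUP z\<in>A. ?Q (z - c))"
  have le_R: "?Q (y - c) \<le> R" if "y \<in> A" for y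
    unfolding R_def by (rule cSUP_upper[OF that bdd])
  obtain z0 where z0: "z0 \<in> A" "R - \<eta> < ?Q (z0 - c)"
    using less_cSUP_iff[OF A(2) bdd, of "R - \<eta>"] \<eta> unfolding R_def by auto
  define h where "h = ?B (z0 - c)"
  have h: "bounded_linear h" unfolding h_def by (rule bounded_linear_coord_inner)
  have "?Q (z - z0) < 3 * \<eta>" if z: "z \<in> slice A h \<eta>" for z
  proof -
    have zA: "z \<in> A" and "h z > Sup (h ` A) - \<eta>" using z unfolding slice_def by auto
    moreover have "h z0 \<le> Sup (h ` A)"
      using z0(1) bdd_above_bounded_linear_image[OF A(1) h] by (rule cSup_upper[OF imageI])
    moreover have "?Q (z - z0) = ?Q (z - c) - 2 * (h z - h c) + ?Q (z0 - c)"
    proof -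
      have "?Q (z - z0) = ?Q ((z - c) - (z0 - c))" by simp
      also have "\<dots> = ?Q (z - c) - 2 * ?B (z - c) (z0 - c) + ?Q (z0 - c)"
        by (rule coord_sq_diff)
      also have "?B (z - c) (z0 - c) = h z - h c"
        unfolding h_def coord_inner_commute[of "z - c"] by (rule coord_inner_diff)
      finally show ?thesis .
    qed
    moreover have "h z0 - h c = ?Q (z0 - c)"
      unfolding h_def coord_inner_diff[symmetric] by (rule coord_inner_self)
    ultimately show ?thesis using le_R[OF zA] z0(2) by (smt (verit))
  qed
  moreover have "is_slice A (slice A h \<eta>)" unfolding is_slice_def using h \<eta> by blast
  moreover have "slice A h \<eta> \<noteq> {}" by (rule slice_nonempty[OF A(2,1) h \<eta>])
  moreover have "?Q (y - c) < ?Q (z0 - c) + \<eta>" if "y \<in> A" for y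
    using le_R[OF that] z0(2) by linarith
  ultimately show ?thesis using that z0(1) by blast
qed

lemma exists_small_slice_point_near_farthest:
  assumes A: "bounded A" "A \<noteq> {}" and e: "e > 0" "2 * e \<le> r"
  obtains z0 z where "z0 \<in> A" "z \<in> small_slice_points A g k r" "\<And>j. j < k \<Longrightarrow> \<bar>g j (z - z0)\<bar> < e"
    "\<And>y. y \<in> A \<Longrightarrow> coord_sq g k (y - c) < coord_sq g k (z0 - c) + e\<^sup>2 / 3"
proof -
  obtain z0 S where z0: "z0 \<in> A" "is_slice A S" "S \<noteq> {}"
    "\<And>z. z \<in> S \<Longrightarrow> coord_sq g k (z - z0) < e\<^sup>2"
    "\<And>y. y \<in> A \<Longrightarrow> coord_sq g k (y - c) < coord_sq g k (z0 - c) + e\<^sup>2 / 3"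
    using farthest_point_slice[OF A, of "e\<^sup>2 / 3" c] e(1) by auto
  obtain z where "z \<in> S" using z0(3) by blast
  have near: "\<bar>g j (w - z0)\<bar> < e" if "w \<in> S" "j < k" for w j
    using abs_coord_less[OF that(2) z0(4)[OF that(1)] e(1)] .
  have "\<bar>g j w - g j z\<bar> < r" if "w \<in> S" "j < k" for w j
    using near[OF that] near[OF \<open>z \<in> S\<close> that(2)] coord_diff[OF that(2)] e(2) by force
  then have "z \<in> small_slice_points A g k r"
    unfolding small_slice_points_def using \<open>z \<in> S\<close> z0(2) is_slice_subset by blast
  then show ?thesis using that z0(1,5) near[OF \<open>z \<in> S\<close>] by blast
qed

text \<open>The variational inequality for an almost closest point \<open>w0\<close> of \<open>C\<close> to \<open>x0\<close>: moving from
  \<open>w0\<close> a short way towards any \<open>w \<in> C\<close> cannot decrease the distance by much.\<close>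

lemma far_convex_separation:
  assumes C: "convex C" "C \<noteq> {}" and M: "\<And>a b. a \<in> C \<Longrightarrow> b \<in> C \<Longrightarrow> coord_sq g k (a - b) \<le> M"
    and \<theta>: "\<theta> > 0" and far: "\<And>w. w \<in> C \<Longrightarrow> \<theta> \<le> coord_sq g k (w - x0)"
  obtains v where "\<And>w. w \<in> C \<Longrightarrow> 3 * \<theta> / 4 < coord_inner g k v (x0 - w)"
proof -
  let ?Q = "coord_sq g k" and ?B = "coord_inner g k"
  obtain c where "c \<in> C" using C(2) by blast
  then have M0: "M \<ge> 0" using M[of c c] coord_sq_nonneg[of "c - c"] by linarith
  define d where "d = (INF w\<in>C. ?Q (w - x0))"
  have bdd: "bdd_below ((\<lambda>w. ?Q (w - x0)) ` C)"
    using coord_sq_nonneg by (intro bdd_belowI[where m = 0]) auto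
  have d_le: "d \<le> ?Q (w - x0)" if "w \<in> C" for w
    unfolding d_def by (rule cINF_lower[OF bdd that])
  define t where "t = min 1 (\<theta> / 4 / (M + 1))"
  have t: "t > 0" "t \<le> 1" "M * t \<le> \<theta> / 4"
    using \<theta> M0 mult_le_if_le_divide_add1[OF M0, of "\<theta> / 4" t] unfolding t_def by auto
  obtain w0 where w0: "w0 \<in> C" "?Q (w0 - x0) < d + t * \<theta> / 4"
    using cINF_less_iff[OF C(2) bdd, of "d + t * \<theta> / 4"] t(1) \<theta> unfolding d_def by auto
  define v where "v = x0 - w0"
  have Qv: "\<theta> \<le> ?Q v" "?Q v < d + t * \<theta> / 4"
    using far[OF w0(1)] w0(2) coord_sq_minus_commute[of w0 x0] unfolding v_def by auto
  have small: "?B v (w - w0) < \<theta> / 4" if w: "w \<in> C" for w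
  proof -
    have "(1 - t) *\<^sub>R w0 + t *\<^sub>R w \<in> C"
      using convexD[OF C(1) w0(1) w, of "1 - t" t] t by auto
    moreover have "(1 - t) *\<^sub>R w0 + t *\<^sub>R w - x0 = t *\<^sub>R (w - w0) - v"
      unfolding v_def by (simp add: algebra_simps)
    ultimately have "d \<le> ?Q (v - t *\<^sub>R (w - w0))"
      using d_le coord_sq_minus_commute[of "t *\<^sub>R (w - w0)" v] by metis
    also have "\<dots> = ?Q v - 2 * t * ?B v (w - w0) + t\<^sup>2 * ?Q (w - w0)"
      by (simp add: coord_sq_diff coord_inner_scaleR coord_sq_scaleR)
    also have "t\<^sup>2 * ?Q (w - w0) \<le> t\<^sup>2 * M"
      using M[OF w w0(1)] by (intro mult_left_mono) auto
    finally have "t * (2 * ?B v (w - w0)) < t * (\<theta> / 4 + t * M)"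
      using Qv(2) by (simp add: algebra_simps power2_eq_square)
    then have "2 * ?B v (w - w0) < \<theta> / 4 + t * M" using t(1) by simp
    then show ?thesis using t(3) by (simp add: mult.commute)
  qed
  have split: "?B v (x0 - w) = ?Q v - ?B v (w - w0)" for w
  proof -
    have "x0 - w = v - (w - w0)" unfolding v_def by simp
    then show ?thesis by (simp only: coord_inner_diff coord_inner_self)
  qed
  show ?thesis
  proof (rule that)
    fix w assume "w \<in> C"
    then show "3 * \<theta> / 4 < ?B v (x0 - w)" using small split[of w] Qv(1) by fastforce
  qed
qed

lemma coord_inner_bound_far_center:
  assumes "coord_sq g k (s *\<^sub>R v) < coord_sq g k (z0 - (x0 - s *\<^sub>R v)) + \<eta>"
    and "coord_sq g k (z0 - x0) \<le> M"
  shows "2 * s * coord_inner g k v (x0 - z0) < M + \<eta>"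
proof -
  let ?Q = "coord_sq g k" and ?B = "coord_inner g k"
  have "?Q (z0 - (x0 - s *\<^sub>R v)) = ?Q ((z0 - x0) + s *\<^sub>R v)"
    by (simp add: algebra_simps)
  also have "\<dots> = ?Q (z0 - x0) + 2 * ?B (z0 - x0) (s *\<^sub>R v) + ?Q (s *\<^sub>R v)"
    by (rule coord_sq_add)
  also have "?B (z0 - x0) (s *\<^sub>R v) = - s * ?B v (x0 - z0)"
    by (simp add: coord_inner_commute[of "z0 - x0"] coord_inner_scaleR coord_inner_diff algebra_simps)
  finally show ?thesis using assms by linarith
qed

text \<open>Centering the farthest-point argument at \<open>x0 - s v\<close> with \<open>s\<close> large produces a point of
  a small slice that is, up to \<open>\<theta> / 2\<close>, at least as far out as \<open>x0\<close> in the direction \<open>v\<close>.\<close>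

lemma exists_small_slice_point_in_direction:
  assumes A: "bounded A" "x0 \<in> A" and r: "r > 0" and \<theta>: "\<theta> > 0"
  obtains z where "z \<in> small_slice_points A g k r" "coord_inner g k v (x0 - z) < \<theta> / 2"
proof -
  let ?Q = "coord_sq g k" and ?B = "coord_inner g k"
  obtain M where M: "M \<ge> 0" "\<And>a b. a \<in> A \<Longrightarrow> b \<in> A \<Longrightarrow> ?Q (a - b) \<le> M"
    using bounded_coord_sq_diff[OF A(1)] by blast
  define L where "L = (\<Sum>j<k. \<bar>g j v\<bar>)"
  have L: "L \<ge> 0" unfolding L_def by (simp add: sum_nonneg)
  define e where "e = min (r / 2) (\<theta> / 4 / (L + 1))"
  have e: "e > 0" "2 * e \<le> r" "L * e \<le> \<theta> / 4"
    using r \<theta> L mult_le_if_le_divide_add1[OF L, of "\<theta> / 4" e] unfolding e_def by auto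
  define \<eta> where "\<eta> = e\<^sup>2 / 3"
  define s where "s = 2 * (1 + M + \<eta>) / \<theta>"
  have s: "s > 0" "s * (\<theta> / 2) = 1 + M + \<eta>"
    unfolding s_def \<eta>_def using M(1) \<theta> by (auto simp: field_simps add_pos_nonneg)
  obtain z0 z where z: "z0 \<in> A" "z \<in> small_slice_points A g k r"
    "\<And>j. j < k \<Longrightarrow> \<bar>g j (z - z0)\<bar> < e"
    "\<And>y. y \<in> A \<Longrightarrow> ?Q (y - (x0 - s *\<^sub>R v)) < ?Q (z0 - (x0 - s *\<^sub>R v)) + \<eta>"
    using exists_small_slice_point_near_farthest[OF A(1) _ e(1,2)] A(2) unfolding \<eta>_def by blast
  have "2 * s * ?B v (x0 - z0) < M + \<eta>"
    using z(4)[OF A(2)] M(2)[OF z(1) A(2)] by (intro coord_inner_bound_far_center) simp_all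
  then have "s * (2 * ?B v (x0 - z0)) < s * (\<theta> / 2)" using s(2) by simp
  then have "?B v (x0 - z0) < \<theta> / 4" using s(1) by simp
  moreover have "\<bar>?B v (z - z0)\<bar> \<le> \<theta> / 4"
  proof -
    have "\<bar>?B v (z - z0)\<bar> \<le> L * e"
      unfolding L_def using z(3) by (intro abs_coord_inner_le less_imp_le)
    then show ?thesis using e(3) by linarith
  qed
  moreover have "?B v (x0 - z) = ?B v (x0 - z0) - ?B v (z - z0)"
  proof -
    have "x0 - z = (x0 - z0) - (z - z0)" by simp
    then show ?thesis by (simp only: coord_inner_diff)
  qed
  ultimately have "?B v (x0 - z) < \<theta> / 2" by linarith
  with z(2) show ?thesis by (rule that)
qed

text \<open>Otherwise \<open>x0\<close> could be separated from the hull, contradicting the previous lemma.\<close>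

lemma dist_convex_hull_small_slice_points:
  assumes A: "bounded A" "convex A" "x0 \<in> A" and r: "r > 0" and \<theta>: "\<theta> > 0"
  shows "\<exists>w \<in> convex hull (small_slice_points A g k r). coord_sq g k (w - x0) < \<theta>"
proof (rule ccontr)
  let ?D = "small_slice_points A g k r"
  assume "\<not> ?thesis"
  then have far: "\<theta> \<le> coord_sq g k (w - x0)" if "w \<in> convex hull ?D" for w
    using that by (simp add: not_less)
  have "convex hull ?D \<subseteq> A"
    using A(2) by (intro hull_minimal) (auto simp: small_slice_points_def)
  moreover obtain M where "M \<ge> 0" "\<And>a b. a \<in> A \<Longrightarrow> b \<in> A \<Longrightarrow> coord_sq g k (a - b) \<le> M"
    using bounded_coord_sq_diff[OF A(1)] by blast
  ultimately have M: "coord_sq g k (a - b) \<le> M" if "a \<in> convex hull ?D" "b \<in> convex hull ?D" for a b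
    using that by blast
  obtain z where "z \<in> ?D"
    using exists_small_slice_point_in_direction[OF A(1,3) r \<theta>, where v = 0] by metis
  then have "convex hull ?D \<noteq> {}" using hull_subset[of ?D] by blast
  then obtain v where v: "\<And>w. w \<in> convex hull ?D \<Longrightarrow> 3 * \<theta> / 4 < coord_inner g k v (x0 - w)"
    using far_convex_separation[OF convex_convex_hull _ M \<theta> far] by metis
  obtain z where z: "z \<in> ?D" "coord_inner g k v (x0 - z) < \<theta> / 2"
    using exists_small_slice_point_in_direction[OF A(1,3) r \<theta>, where v = v] by metis
  moreover have "z \<in> convex hull ?D" using z(1) hull_subset[of ?D] by blast
  ultimately show False using v[of z] \<theta> by linarith
qed

text \<open>Bourgain's lemma: \<open>x0\<close> is close to a convex combination of points \<open>p i\<close> lying in slices of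
  small diameter, and moving each \<open>p i\<close> within its slice moves the combination only a little.\<close>

lemma convex_combination_slices_near:
  assumes A: "bounded A" "convex A" "x0 \<in> A" and \<epsilon>: "\<epsilon> > 0"
  obtains m :: nat and l :: "nat \<Rightarrow> real" and S :: "nat \<Rightarrow> 'a set"
  where "m \<ge> 1" "\<And>i. i < m \<Longrightarrow> l i > 0 \<and> is_slice A (S i)" "(\<Sum>i<m. l i) = 1"
    "\<And>y. \<forall>i<m. y i \<in> S i \<Longrightarrow> (\<Sum>i<m. l i *\<^sub>R y i) \<in> weak_nbhd g k x0 \<epsilon>"
proof -
  define r where "r = \<epsilon> / 2"
  have r: "r > 0" unfolding r_def using \<epsilon> by simp
  obtain w where w: "w \<in> convex hull (small_slice_points A g k r)" "coord_sq g k (w - x0) < r\<^sup>2"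
    using dist_convex_hull_small_slice_points[OF A r, of "r\<^sup>2"] r by auto
  obtain m :: nat and l p where mlp: "m \<ge> 1" "\<And>i. i < m \<Longrightarrow> l i > 0 \<and> p i \<in> small_slice_points A g k r"
    "(\<Sum>i<m. l i) = 1" "w = (\<Sum>i<m. l i *\<^sub>R p i)"
    using convex_hull_positive_combination[OF w(1)] by blast
  have "\<exists>S. i < m \<longrightarrow> is_slice A S \<and> p i \<in> S \<and> (\<forall>z\<in>S. \<forall>j<k. \<bar>g j z - g j (p i)\<bar> < r)" for i
    using mlp(2)[of i] unfolding small_slice_points_def by (cases "i < m") auto
  then obtain S where S: "\<And>i. i < m \<Longrightarrow> is_slice A (S i) \<and> (\<forall>z\<in>S i. \<forall>j<k. \<bar>g j z - g j (p i)\<bar> < r)"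
    by metis
  have near: "\<bar>g j (\<Sum>i<m. l i *\<^sub>R y i) - g j x0\<bar> < \<epsilon>" if y: "\<forall>i<m. y i \<in> S i" and j: "j < k" for y j
  proof -
    have "g j (\<Sum>i<m. l i *\<^sub>R y i) - g j x0 = (\<Sum>i<m. l i * (g j (y i) - g j (p i))) + g j (w - x0)"
      unfolding mlp(4) by (simp add: coord_sum[OF j] coord_scaleR[OF j] coord_diff[OF j]
          sum_subtractf right_diff_distrib)
    moreover have "\<bar>\<Sum>i<m. l i * (g j (y i) - g j (p i))\<bar> \<le> (\<Sum>i<m. l i * r)"
    proof (rule order_trans[OF sum_abs sum_mono])
      fix i assume "i \<in> {..<m}"
      then have "\<bar>g j (y i) - g j (p i)\<bar> < r" "l i > 0" using S y j mlp(2) by auto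
      then show "\<bar>l i * (g j (y i) - g j (p i))\<bar> \<le> l i * r" by (simp add: abs_mult)
    qed
    moreover have "(\<Sum>i<m. l i * r) = r" using mlp(3) by (simp add: sum_distrib_right[symmetric])
    moreover have "\<bar>g j (w - x0)\<bar> < r" by (rule abs_coord_less[OF j w(2) r])
    ultimately show ?thesis unfolding r_def by linarith
  qed
  show ?thesis
  proof (rule that[OF mlp(1) _ mlp(3)])
    show "l i > 0 \<and> is_slice A (S i)" if "i < m" for i using S mlp(2) that by blast
    show "(\<Sum>i<m. l i *\<^sub>R y i) \<in> weak_nbhd g k x0 \<epsilon>" if "\<forall>i<m. y i \<in> S i" for y
      using near[OF that] unfolding weak_nbhd_def by blast
  qed
qed

lemma rational_weights_coord_near:
  assumes A: "bounded A" and l: "m \<ge> 1" "\<And>i. i < m \<Longrightarrow> l i > 0" "(\<Sum>i<m. l i) = 1"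
    and e: "e > 0"
  obtains \<mu> :: "nat \<Rightarrow> rat"
  where "\<And>i. i < m \<Longrightarrow> (of_rat (\<mu> i) :: real) > 0" "(\<Sum>i<m. (of_rat (\<mu> i) :: real)) = 1"
    "\<And>x j. (\<And>i. i < m \<Longrightarrow> x i \<in> A) \<Longrightarrow> j < k \<Longrightarrow>
      \<bar>g j (\<Sum>i<m. of_rat (\<mu> i) *\<^sub>R x i) - g j (\<Sum>i<m. l i *\<^sub>R x i)\<bar> \<le> e"
proof -
  obtain K where K: "K \<ge> 0" "\<And>j u. j < k \<Longrightarrow> u \<in> A \<Longrightarrow> \<bar>g j u\<bar> \<le> K"
    using bounded_coord_abs[OF A] by blast
  have mK: "real m * K \<ge> 0" using K(1) by simp
  define \<eta> where "\<eta> = e / (real m * K + 1)"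
  have \<eta>: "\<eta> > 0" "real m * K * \<eta> \<le> e"
    using e mK mult_le_if_le_divide_add1[OF mK, of e \<eta>] unfolding \<eta>_def by auto
  obtain \<mu> :: "nat \<Rightarrow> rat"
    where \<mu>: "\<And>i. i < m \<Longrightarrow> (of_rat (\<mu> i) :: real) > 0 \<and> \<bar>of_rat (\<mu> i) - l i\<bar> < \<eta>"
      "(\<Sum>i<m. (of_rat (\<mu> i) :: real)) = 1"
    using rational_weights_approx[OF l \<eta>(1)] by blast
  have "\<bar>g j (\<Sum>i<m. of_rat (\<mu> i) *\<^sub>R x i) - g j (\<Sum>i<m. l i *\<^sub>R x i)\<bar> \<le> e"
    if x: "\<And>i. i < m \<Longrightarrow> x i \<in> A" and j: "j < k" for x j
  proof -
    have "\<bar>g j (\<Sum>i<m. of_rat (\<mu> i) *\<^sub>R x i) - g j (\<Sum>i<m. l i *\<^sub>R x i)\<bar> \<le> real m * \<eta> * K"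
      using \<mu>(1) K(2)[OF j x] by (intro abs_linear_combination_diff_le coord_linear[OF j]) (auto simp: less_imp_le)
    then show ?thesis using \<eta>(2) by (simp add: mult_ac)
  qed
  then show ?thesis using that \<mu> by blast
qed

end

section \<open>A countable weak base from a determining sequence of slices\<close>

text \<open>If a slice \<open>{f > c}\<close> contained no \<open>S n\<close>, points \<open>y n \<in> S n\<close> with \<open>f (y n) \<le> c\<close> would form a
  set whose closed convex hull contains \<open>A\<close> but lies in the half-space \<open>{f \<le> c}\<close>.\<close>

lemma SCD_slice_contains:
  fixes A :: "'a::real_normed_vector set"
  assumes S: "\<forall>n. is_slice A (S n)"
    and det: "\<forall>B. B \<subseteq> A \<and> (\<forall>n. B \<inter> S n \<noteq> {}) \<longrightarrow> A \<subseteq> closure (convex hull B)"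
    and A: "A \<noteq> {}" and T: "is_slice A T"
  shows "\<exists>n. S n \<subseteq> T"
proof (rule ccontr)
  assume "\<nexists>n. S n \<subseteq> T"
  then have "\<forall>n. \<exists>y. y \<in> S n \<and> y \<notin> T" by blast
  then obtain y where y: "\<And>n. y n \<in> S n" "\<And>n. y n \<notin> T" by metis
  obtain f e where f: "bounded_linear f" "e > 0" "T = slice A f e"
    using T unfolding is_slice_def by blast
  define c where "c = Sup (f ` A) - e"
  have yA: "y n \<in> A" for n using S is_slice_subset y(1) by blast
  then have "range y \<subseteq> f -` {..c}" using y(2) unfolding f(3) slice_def c_def by (auto simp: not_less)
  moreover have "closed (f -` {..c})"
    by (intro closed_vimage closed_atMost linear_continuous_on f(1))
  moreover have "convex (f -` {..c})"
    by (intro convex_linear_vimage bounded_linear.linear[OF f(1)] convex_real_interval)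
  ultimately have "closure (convex hull (range y)) \<subseteq> f -` {..c}"
    by (intro closure_minimal hull_minimal)
  moreover have "A \<subseteq> closure (convex hull (range y))"
    using det[rule_format, of "range y"] yA y(1) by blast
  ultimately have "Sup (f ` A) \<le> c" using A by (intro cSup_least) auto
  then show False using f(2) unfolding c_def by simp
qed

text \<open>A list of pairs \<open>(n, \<mu>)\<close> encodes the convex combination \<open>\<Sum> \<mu> \<cdot> S n\<close> with rational weights;
  there are only countably many such lists.\<close>

definition rat_ccs :: "(nat \<Rightarrow> 'a::real_vector set) \<Rightarrow> (nat \<times> rat) list \<Rightarrow> 'a set" where
  "rat_ccs S p =
    {\<Sum>i<length p. of_rat (snd (p ! i)) *\<^sub>R x i | x. \<forall>i<length p. x i \<in> S (fst (p ! i))}"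

definition rat_weights :: "(nat \<times> rat) list \<Rightarrow> bool" where
  "rat_weights p \<longleftrightarrow> p \<noteq> [] \<and> (\<forall>i<length p. snd (p ! i) > 0) \<and> (\<Sum>i<length p. snd (p ! i)) = 1"

lemma rat_ccs_map:
  "rat_ccs S (map (\<lambda>i. (N i, \<mu> i)) [0..<m]) =
    {\<Sum>i<m. of_rat (\<mu> i) *\<^sub>R x i | x. \<forall>i<m. x i \<in> S (N i)}"
  unfolding rat_ccs_def by (auto intro!: sum.cong)

lemma rat_weights_map:
  assumes "m \<ge> 1" "\<And>i. i < m \<Longrightarrow> (of_rat (\<mu> i) :: real) > 0" "(\<Sum>i<m. (of_rat (\<mu> i) :: real)) = 1"
  shows "rat_weights (map (\<lambda>i. (N i, \<mu> i)) [0..<m])"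
  unfolding rat_weights_def using assms by (auto simp flip: of_rat_sum)

lemma is_ccs_rat_ccs:
  assumes "\<forall>n. is_slice A (S n)" "rat_weights p"
  shows "is_ccs A (rat_ccs S p)"
  unfolding is_ccs_def rat_ccs_def
proof (intro exI conjI)
  show "length p \<ge> 1" using assms(2) unfolding rat_weights_def by (simp add: Suc_le_eq)
  show "\<forall>i<length p. (of_rat (snd (p ! i)) :: real) > 0 \<and> is_slice A (S (fst (p ! i)))"
    using assms unfolding rat_weights_def by simp
  show "(\<Sum>i<length p. (of_rat (snd (p ! i)) :: real)) = 1"
    using assms(2) unfolding rat_weights_def by (simp flip: of_rat_sum)
qed simp

text \<open>Bourgain's lemma gives a convex combination of slices inside the neighbourhood with
  room \<open>\<epsilon> / 2\<close> to spare; each slice is shrunk to one of the \<open>S n\<close> it contains, and the weights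
  are moved to nearby rationals.\<close>

lemma SCD_weak_open_contains_rat_ccs:
  fixes A :: "'a::real_normed_vector set"
  assumes A: "bounded A" "convex A"
    and S: "\<forall>n. is_slice A (S n)"
    and det: "\<forall>B. B \<subseteq> A \<and> (\<forall>n. B \<inter> S n \<noteq> {}) \<longrightarrow> A \<subseteq> closure (convex hull B)"
    and U: "openin (subtopology weak_topology A) U" "x0 \<in> U"
  obtains p where "rat_weights p" "rat_ccs S p \<subseteq> U"
proof -
  obtain W where W: "openin weak_topology W" "U = W \<inter> A"
    using U(1) unfolding openin_subtopology by blast
  then have x0: "x0 \<in> A" "x0 \<in> W" using U(2) by auto
  obtain k and g :: "nat \<Rightarrow> 'a \<Rightarrow> real" and \<epsilon> :: real where
    g: "\<forall>j<k. bounded_linear (g j)" "\<epsilon> > 0" "weak_nbhd g k x0 \<epsilon> \<subseteq> W"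
    using weak_topology_basic_nbhd[OF W(1) x0(2)] by blast
  obtain m :: nat and l :: "nat \<Rightarrow> real" and T :: "nat \<Rightarrow> 'a set" where
    T: "m \<ge> 1" "\<And>i. i < m \<Longrightarrow> l i > 0 \<and> is_slice A (T i)" "(\<Sum>i<m. l i) = 1"
      "\<And>y. \<forall>i<m. y i \<in> T i \<Longrightarrow> (\<Sum>i<m. l i *\<^sub>R y i) \<in> weak_nbhd g k x0 (\<epsilon> / 2)"
    using convex_combination_slices_near[OF g(1) A x0(1) half_gt_zero[OF g(2)]] by blast
  have "\<forall>i. \<exists>n. i < m \<longrightarrow> S n \<subseteq> T i"
    using SCD_slice_contains[OF S det] x0(1) T(2) by blast
  then obtain N where N: "\<And>i. i < m \<Longrightarrow> S (N i) \<subseteq> T i" by metis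
  have "l i > 0" if "i < m" for i using T(2)[OF that] by blast
  then obtain \<mu> :: "nat \<Rightarrow> rat"
    where \<mu>: "\<And>i. i < m \<Longrightarrow> (of_rat (\<mu> i) :: real) > 0" "(\<Sum>i<m. (of_rat (\<mu> i) :: real)) = 1"
      "\<And>x j. (\<And>i. i < m \<Longrightarrow> x i \<in> A) \<Longrightarrow> j < k \<Longrightarrow>
        \<bar>g j (\<Sum>i<m. of_rat (\<mu> i) *\<^sub>R x i) - g j (\<Sum>i<m. l i *\<^sub>R x i)\<bar> \<le> \<epsilon> / 2"
    using rational_weights_coord_near[OF g(1) A(1) T(1) _ T(3) half_gt_zero[OF g(2)]] by blast
  let ?p = "map (\<lambda>i. (N i, \<mu> i)) [0..<m]"
  have "rat_weights ?p" by (rule rat_weights_map[OF T(1) \<mu>(1,2)])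
  moreover have "rat_ccs S ?p \<subseteq> U"
  proof
    fix z assume "z \<in> rat_ccs S ?p"
    then obtain x where x: "z = (\<Sum>i<m. of_rat (\<mu> i) *\<^sub>R x i)" "\<And>i. i < m \<Longrightarrow> x i \<in> T i"
      unfolding rat_ccs_map using N by blast
    have xA: "x i \<in> A" if "i < m" for i using x(2)[OF that] T(2)[OF that] is_slice_subset by blast
    have "z \<in> A"
      unfolding x(1) by (rule convex_sum) (use A(2) \<mu>(1,2) xA in \<open>auto simp: less_imp_le\<close>)
    moreover have "\<bar>g j z - g j x0\<bar> < \<epsilon>" if j: "j < k" for j
    proof -
      have "\<bar>g j z - g j (\<Sum>i<m. l i *\<^sub>R x i)\<bar> \<le> \<epsilon> / 2" unfolding x(1) by (rule \<mu>(3)[OF xA j])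
      moreover have "\<bar>g j (\<Sum>i<m. l i *\<^sub>R x i) - g j x0\<bar> < \<epsilon> / 2"
        using T(4) x(2) j unfolding weak_nbhd_def by blast
      ultimately show ?thesis by linarith
    qed
    ultimately show "z \<in> U" using g(3) W(2) unfolding weak_nbhd_def by blast
  qed
  ultimately show ?thesis by (rule that)
qed

lemma ccs_weak_base_if_SCD_set:
  fixes A :: "'a::real_normed_vector set"
  assumes A: "bounded A" "convex A" and "SCD_set A"
  shows "\<exists>V::nat \<Rightarrow> 'a set. (\<forall>n. is_ccs A (V n)) \<and>
      (\<forall>U. openin (subtopology weak_topology A) U \<and> U \<noteq> {} \<longrightarrow> (\<exists>n. V n \<subseteq> U))"
proof -
  obtain S :: "nat \<Rightarrow> 'a set" where S: "\<forall>n. is_slice A (S n)"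
    and det: "\<forall>B. B \<subseteq> A \<and> (\<forall>n. B \<inter> S n \<noteq> {}) \<longrightarrow> A \<subseteq> closure (convex hull B)"
    using \<open>SCD_set A\<close> unfolding SCD_set_def by blast
  define \<V> where "\<V> = rat_ccs S ` {p. rat_weights p}"
  have "countable \<V>" unfolding \<V>_def by simp
  moreover have "\<V> \<noteq> {}" unfolding \<V>_def rat_weights_def by (auto intro!: exI[of _ "[(0, 1)]"])
  ultimately have "range (from_nat_into \<V>) = \<V>" by simp
  moreover have "\<forall>V\<in>\<V>. is_ccs A V" unfolding \<V>_def using is_ccs_rat_ccs[OF S] by blast
  moreover have "\<exists>V\<in>\<V>. V \<subseteq> U" if U: "openin (subtopology weak_topology A) U" "U \<noteq> {}" for U
  proof -
    obtain x0 where "x0 \<in> U" using U(2) by blast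
    then obtain p where "rat_weights p" "rat_ccs S p \<subseteq> U"
      using SCD_weak_open_contains_rat_ccs[OF A S det U(1)] by blast
    then show ?thesis unfolding \<V>_def by blast
  qed
  ultimately show ?thesis by (metis rangeE rangeI)
qed

theorem theorem6p11:
  fixes A :: "'a::banach set"
  assumes "bounded A" and "convex A"
  shows "SCD_set A \<longleftrightarrow>
    (\<exists>V::nat \<Rightarrow> 'a set. (\<forall>n. is_ccs A (V n)) \<and>
      (\<forall>U. openin (subtopology weak_topology A) U \<and> U \<noteq> {} \<longrightarrow> (\<exists>n. V n \<subseteq> U)))"
proof
  assume "SCD_set A"
  then show "\<exists>V::nat \<Rightarrow> 'a set. (\<forall>n. is_ccs A (V n)) \<and>
      (\<forall>U. openin (subtopology weak_topology A) U \<and> U \<noteq> {} \<longrightarrow> (\<exists>n. V n \<subseteq> U))"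
    by (rule ccs_weak_base_if_SCD_set[OF assms])
next
  assume "\<exists>V::nat \<Rightarrow> 'a set. (\<forall>n. is_ccs A (V n)) \<and>
      (\<forall>U. openin (subtopology weak_topology A) U \<and> U \<noteq> {} \<longrightarrow> (\<exists>n. V n \<subseteq> U))"
  then obtain V :: "nat \<Rightarrow> 'a set" where "\<forall>n. is_ccs A (V n)"
    "\<forall>U. openin (subtopology weak_topology A) U \<and> U \<noteq> {} \<longrightarrow> (\<exists>n. V n \<subseteq> U)"
    by blast
  then show "SCD_set A" by (rule SCD_set_if_ccs_weak_base)
qed

end
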